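(* Let $n,b$ be integers with $1<n<b$, let $C_0$ be a directed cycle of the $(n,b)$-mother graph $M$, and let $\Gamma_0$ be an edge-labelled subgraph of the $(n,b)$-Hoey-Sloane graph $\Gamma$. Then $\Gamma_0$ is the cycle image of $C_0$ if and only if $\overline{\Gamma}_0$ is the cycle image of $\overline{C}_0$.
   Context: Let $\lambda(x)$ denote the least non-negative residue of $x$ modulo $b$. The $(n,b)$-mother graph $M$ is the directed graph on vertex set $\{0,\ldots,b-1\}$ whose edges are the ordered pairs of digits $(d_1,d_2)$ with $\lambda(d_1+(b-n)d_2)\le n-1$; a directed cycle of $M$ (loops allowed) is regarded as its set of edges. The $(n,b)$-Hoey-Sloane graph $\Gamma$ is the edge-labelled directed graph on states $\{0,\ldots,n-1\}$ in which $(c_1,c_2)$ is an edge precisely when $\{(d_1,d_2)\in E(M)\mid n d_2-d_1+c_1=b c_2\}$ is nonempty, this set being its label set. For a digit $d$ put $\overline d=b-1-d$ and for a state $c$ put $\overline c=n-1-c$. The reflection of a cycle $C_0$ is $\overline{C}_0=\{(\overline{d}_1,\overline{d}_2)\mid (d_1,d_2)\in C_0\}$. The cycle image of a directed cycle $C_0$ of $M$ is the edge-labelled subgraph of $\Gamma$ whose edges are the pairs $(c_1,c_2)$ for which $\mathscr{E}=\{(d_1,d_2)\in C_0\mid n d_2-d_1+c_1=b c_2\}$ is nonempty, with label set $\mathscr{E}$, and whose vertices are the states that are endpoints of such edges. The reflection $\overline{\Gamma}_0$ of an edge-labelled subgraph $\Gamma_0$ of $\Gamma$ has vertices $\overline{c}$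 ($c$ a vertex of $\Gamma_0$), edges $(\overline{c}_1,\overline{c}_2)$ ($(c_1,c_2)$ an edge of $\Gamma_0$), and label $(\overline{d}_1,\overline{d}_2)$ on $(\overline{c}_1,\overline{c}_2)$ whenever $(d_1,d_2)$ labels $(c_1,c_2)$ in $\Gamma_0$. *)

theory Defs
  imports Main
begin

definition mother_edges :: "int \<Rightarrow> int \<Rightarrow> (int \<times> int) set" where
  "mother_edges n b = {(d1, d2). d1 \<in> {0..<b} \<and> d2 \<in> {0..<b} \<and>
      (d1 + (b - n) * d2) mod b \<le> n - 1}"

text \<open>A directed cycle of the mother graph (loops allowed), regarded as its edge set:
  distinct vertices v_0,...,v_{k-1} (k \<ge> 1) with edges (v_i, v_{i+1 mod k}).\<close>
definition mother_cycle :: "int \<Rightarrow> int \<Rightarrow> (int \<times> int) set \<Rightarrow> bool" where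
  "mother_cycle n b C \<longleftrightarrow> (\<exists>vs. vs \<noteq> [] \<and> distinct vs \<and> set vs \<subseteq> {0..<b} \<and>
      C = {(vs ! i, vs ! ((i + 1) mod length vs)) | i. i < length vs} \<and>
      C \<subseteq> mother_edges n b)"

text \<open>Edge-labelled graphs on integer states: (vertices, edges, label function);
  the label function is empty off the edge set.\<close>
type_synonym lgraph = "int set \<times> (int \<times> int) set \<times> (int \<times> int \<Rightarrow> (int \<times> int) set)"

definition HS_label :: "int \<Rightarrow> int \<Rightarrow> int \<times> int \<Rightarrow> (int \<times> int) set" where
  "HS_label n b e = (case e of (c1, c2) \<Rightarrow>
     if c1 \<in> {0..<n} \<and> c2 \<in> {0..<n}
     then {(d1, d2) \<in> mother_edges n b. n * d2 - d1 + c1 = b * c2} else {})"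

definition HS_edges :: "int \<Rightarrow> int \<Rightarrow> (int \<times> int) set" where
  "HS_edges n b = {e. HS_label n b e \<noteq> {}}"

definition HS_subgraph :: "int \<Rightarrow> int \<Rightarrow> lgraph \<Rightarrow> bool" where
  "HS_subgraph n b G \<longleftrightarrow> (case G of (V, E, L) \<Rightarrow>
     V \<subseteq> {0..<n} \<and> E \<subseteq> HS_edges n b \<and> (\<forall>(c1, c2) \<in> E. c1 \<in> V \<and> c2 \<in> V) \<and>
     (\<forall>e \<in> E. L e \<subseteq> HS_label n b e) \<and> (\<forall>e. e \<notin> E \<longrightarrow> L e = {}))"

definition cycle_image :: "int \<Rightarrow> int \<Rightarrow> (int \<times> int) set \<Rightarrow> lgraph" where
  "cycle_image n b C =
     (let L = (\<lambda>(c1, c2). if c1 \<in> {0..<n} \<and> c2 \<in> {0..<n}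
                  then {(d1, d2) \<in> C. n * d2 - d1 + c1 = b * c2} else {});
          E = {e. L e \<noteq> {}}
      in (fst ` E \<union> snd ` E, E, L))"

definition dbar :: "int \<Rightarrow> int \<Rightarrow> int" where "dbar b d = b - 1 - d"
definition cbar :: "int \<Rightarrow> int \<Rightarrow> int" where "cbar n c = n - 1 - c"

definition reflect_cycle :: "int \<Rightarrow> (int \<times> int) set \<Rightarrow> (int \<times> int) set" where
  "reflect_cycle b C = (\<lambda>(d1, d2). (dbar b d1, dbar b d2)) ` C"

definition reflect_graph :: "int \<Rightarrow> int \<Rightarrow> lgraph \<Rightarrow> lgraph" where
  "reflect_graph n b G = (case G of (V, E, L) \<Rightarrow>
     (cbar n ` V, (\<lambda>(c1, c2). (cbar n c1, cbar n c2)) ` E,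
      \<lambda>(c1', c2'). (\<lambda>(d1, d2). (dbar b d1, dbar b d2)) ` L (cbar n c1', cbar n c2')))"

end

theory Submission
  imports Defs
begin

text \<open>The reflections \<open>d \<mapsto> b - 1 - d\<close> of digits and \<open>c \<mapsto> n - 1 - c\<close> of states turn the
  carry equation \<open>n d\<^sub>2 - d\<^sub>1 + c\<^sub>1 = b c\<^sub>2\<close> into itself, so reflecting a cycle reflects its
  cycle image. As graph reflection is an involution, the equivalence follows; in particular
  none of the hypotheses on \<open>n\<close>, \<open>b\<close>, \<open>C0\<close> and \<open>G0\<close> is needed.\<close>

definition reflect_digits :: "int \<Rightarrow> int \<times> int \<Rightarrow> int \<times> int" where
  "reflect_digits b = (\<lambda>(d1, d2). (dbar b d1, dbar b d2))"

definition reflect_states :: "int \<Rightarrow> int \<times> int \<Rightarrow> int \<times> int" where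
  "reflect_states n = (\<lambda>(c1, c2). (cbar n c1, cbar n c2))"

lemma reflect_digits_Pair [simp]: "reflect_digits b (d1, d2) = (dbar b d1, dbar b d2)"
  by (simp add: reflect_digits_def)

lemma reflect_states_Pair [simp]: "reflect_states n (c1, c2) = (cbar n c1, cbar n c2)"
  by (simp add: reflect_states_def)

lemma dbar_dbar [simp]: "dbar b (dbar b d) = d"
  by (simp add: dbar_def)

lemma cbar_cbar [simp]: "cbar n (cbar n c) = c"
  by (simp add: cbar_def)

lemma reflect_digits_reflect_digits [simp]: "reflect_digits b (reflect_digits b p) = p"
  by (cases p) simp

lemma reflect_states_reflect_states [simp]: "reflect_states n (reflect_states n e) = e"
  by (cases e) simp

lemma involution_image_eq_vimage:
  assumes "\<And>x. f (f x) = x"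
  shows "f ` A = f -` A"
  using assms by (auto intro: image_eqI[where x = "f _"])

lemma involution_image_image:
  assumes "\<And>x. f (f x) = x"
  shows "f ` f ` A = A"
  by (simp add: image_image assms)

lemma reflect_cycle_eq: "reflect_cycle b C = reflect_digits b ` C"
  by (simp add: reflect_cycle_def reflect_digits_def)

lemma reflect_graph_eq:
  "reflect_graph n b (V, E, L) =
     (cbar n ` V, reflect_states n ` E, \<lambda>e. reflect_digits b ` L (reflect_states n e))"
  by (auto simp: reflect_graph_def reflect_states_def reflect_digits_def)

lemma reflect_graph_reflect_graph: "reflect_graph n b (reflect_graph n b G) = G"
proof -
  obtain V E L where "G = (V, E, L)"
    by (cases G) auto
  then show ?thesis
    by (simp add: reflect_graph_eq involution_image_image)
qed

definition cycle_label :: "int \<Rightarrow> int \<Rightarrow> (int \<times> int) set \<Rightarrow> int \<times> int \<Rightarrow> (int \<times> int) set" where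
  "cycle_label n b C = (\<lambda>(c1, c2). if c1 \<in> {0..<n} \<and> c2 \<in> {0..<n}
     then {(d1, d2) \<in> C. n * d2 - d1 + c1 = b * c2} else {})"

lemma cycle_image_eq:
  "cycle_image n b C =
     (let E = {e. cycle_label n b C e \<noteq> {}} in (fst ` E \<union> snd ` E, E, cycle_label n b C))"
  unfolding cycle_image_def cycle_label_def Let_def ..

lemma carry_equation_reflect:
  "n * dbar b d2 - dbar b d1 + c1 = b * c2 \<longleftrightarrow> n * d2 - d1 + cbar n c1 = b * cbar n c2"
  by (simp add: dbar_def cbar_def algebra_simps) linarith

lemma cbar_mem_states_iff [simp]: "cbar n c \<in> {0..<n} \<longleftrightarrow> c \<in> {0..<n}"
  by (auto simp: cbar_def)

lemma cycle_label_reflect_cycle: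
  "cycle_label n b (reflect_digits b ` C) e =
     reflect_digits b ` cycle_label n b C (reflect_states n e)"
proof -
  obtain c1 c2 where e: "e = (c1, c2)"
    by (cases e)
  have "p \<in> cycle_label n b (reflect_digits b ` C) e \<longleftrightarrow>
        reflect_digits b p \<in> cycle_label n b C (reflect_states n e)" for p
    by (cases p) (simp add: e cycle_label_def carry_equation_reflect
        involution_image_eq_vimage[of "reflect_digits b"] del: atLeastLessThan_iff)
  then show ?thesis
    by (auto simp: involution_image_eq_vimage[of "reflect_digits b"])
qed

lemma reflect_graph_cycle_image:
  "reflect_graph n b (cycle_image n b C) = cycle_image n b (reflect_cycle b C)"
proof -
  let ?L = "cycle_label n b C" and ?L' = "cycle_label n b (reflect_cycle b C)"
  have labels: "(\<lambda>e. reflect_digits b ` ?L (reflect_states n e)) = ?L'"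
    by (simp add: fun_eq_iff reflect_cycle_eq cycle_label_reflect_cycle)
  have edges: "reflect_states n ` {e. ?L e \<noteq> {}} = {e. ?L' e \<noteq> {}}"
    by (auto simp: involution_image_eq_vimage[of "reflect_states n"] simp flip: labels)
  have vertices: "cbar n ` (fst ` E \<union> snd ` E) =
      fst ` reflect_states n ` E \<union> snd ` reflect_states n ` E" for E
    by (simp add: image_Un image_image reflect_states_def case_prod_beta)
  show ?thesis
    unfolding cycle_image_eq Let_def reflect_graph_eq labels vertices edges ..
qed

theorem corollary13:
  fixes n b :: int and C0 :: "(int \<times> int) set" and G0 :: lgraph
  assumes "1 < n" and "n < b"
    and "mother_cycle n b C0"
    and "HS_subgraph n b G0"
  shows "G0 = cycle_image n b C0 \<longleftrightarrow>
         reflect_graph n b G0 = cycle_image n b (reflect_cycle b C0)"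
  by (metis reflect_graph_cycle_image reflect_graph_reflect_graph)

end
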